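(* Let $G$ be a $2$-connected graph and $K$ a connected subgraph of $G$ with at least three vertices. Then $G_K$ is $2$-connected.
   Context: Graphs are simple. For a connected graph $G$ and a subgraph $K$, $G_K$ denotes the minor of $G$ obtained by contracting, for each component of $G-K$ (the graph obtained by deleting the vertices of $K$), all edges of that component to a single vertex, and then deleting all multiple edges. *)

theory Defs
  imports Main
begin

definition graph :: "'a set \<Rightarrow> ('a \<Rightarrow> 'a \<Rightarrow> bool) \<Rightarrow> bool" where
  "graph V E \<longleftrightarrow> finite V \<and> (\<forall>x y. E x y \<longrightarrow> x \<in> V \<and> y \<in> V)
     \<and> (\<forall>x y. E x y \<longrightarrow> E y x) \<and> (\<forall>x. \<not> E x x)"

definition subgraph :: "'a set \<Rightarrow> ('a \<Rightarrow> 'a \<Rightarrow> bool) \<Rightarrow> 'a set \<Rightarrow> ('a \<Rightarrow> 'a \<Rightarrow> bool) \<Rightarrow> bool" where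
  "subgraph VK EK V E \<longleftrightarrow> graph VK EK \<and> VK \<subseteq> V \<and> (\<forall>x y. EK x y \<longrightarrow> E x y)"

definition reach :: "'a set \<Rightarrow> ('a \<Rightarrow> 'a \<Rightarrow> bool) \<Rightarrow> 'a \<Rightarrow> 'a \<Rightarrow> bool" where
  "reach W E = (\<lambda>x y. x \<in> W \<and> y \<in> W \<and> E x y)\<^sup>*\<^sup>*"

definition connected :: "'a set \<Rightarrow> ('a \<Rightarrow> 'a \<Rightarrow> bool) \<Rightarrow> bool" where
  "connected W E \<longleftrightarrow> W \<noteq> {} \<and> (\<forall>x\<in>W. \<forall>y\<in>W. reach W E x y)"

definition two_connected :: "'a set \<Rightarrow> ('a \<Rightarrow> 'a \<Rightarrow> bool) \<Rightarrow> bool" where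
  "two_connected V E \<longleftrightarrow> card V \<ge> 3 \<and> connected V E \<and> (\<forall>v\<in>V. connected (V - {v}) E)"

definition components :: "'a set \<Rightarrow> ('a \<Rightarrow> 'a \<Rightarrow> bool) \<Rightarrow> 'a set set" where
  "components W E = (\<lambda>x. {y. reach W E x y}) ` W"

text \<open>The minor G_K: vertices are the singletons {v} for v in K and the (vertex sets of the)
  components of G - K, each contracted to a single vertex; two such vertices are adjacent iff
  they are distinct and G has an edge between them (multiple edges and loops removed).\<close>
definition GK_verts :: "'a set \<Rightarrow> ('a \<Rightarrow> 'a \<Rightarrow> bool) \<Rightarrow> 'a set \<Rightarrow> 'a set set" where
  "GK_verts V E VK = (\<lambda>v. {v}) ` VK \<union> components (V - VK) E"

definition GK_edges :: "'a set \<Rightarrow> ('a \<Rightarrow> 'a \<Rightarrow> bool) \<Rightarrow> 'a set \<Rightarrow> 'a set \<Rightarrow> 'a set \<Rightarrow> bool" where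
  "GK_edges V E VK X Y \<longleftrightarrow> X \<in> GK_verts V E VK \<and> Y \<in> GK_verts V E VK \<and> X \<noteq> Y
     \<and> (\<exists>x\<in>X. \<exists>y\<in>Y. E x y)"

end

theory Submission
  imports Defs
begin

text \<open>Map every vertex u of G to the vertex of G_K containing it. This map is onto and sends
  edges of G to edges or loops of G_K, so connectivity of G and of G - v (for v in K) transfers
  to G_K and to G_K - {v}. Deleting a contracted component X instead keeps G_K connected for a
  different reason: K is connected, and every other component has an edge into K because G is
  connected. Three vertices in K give G_K at least three vertices.\<close>

lemma reach_refl [simp]: "reach U E x x"
  unfolding reach_def by simp

lemma reach_trans: "reach U E x y \<Longrightarrow> reach U E y z \<Longrightarrow> reach U E x z"
  unfolding reach_def by (rule rtranclp_trans)

lemma reach_edge: "x \<in> U \<Longrightarrow> y \<in> U \<Longrightarrow> E x y \<Longrightarrow> reach U E x y"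
  unfolding reach_def by auto

lemma reach_sym:
  assumes "\<forall>x y. E x y \<longrightarrow> E y x" and "reach U E x y"
  shows "reach U E y x"
  using assms(2) unfolding reach_def
proof (induction rule: rtranclp_induct)
  case (step y z)
  then show ?case
    using assms(1) by (blast intro: converse_rtranclp_into_rtranclp)
qed simp

lemma reach_closed: "reach U E x y \<Longrightarrow> x \<in> U \<Longrightarrow> y \<in> U"
  unfolding reach_def by (induction rule: rtranclp_induct) auto

lemma reach_mono: "reach U E' x y \<Longrightarrow> (\<And>a b. E' a b \<Longrightarrow> E a b) \<Longrightarrow> reach U E x y"
  unfolding reach_def by (induction rule: rtranclp_induct) (auto intro: rtranclp.rtrancl_into_rtrancl)

lemma connected_mono:
  assumes "connected U E'" and "\<And>a b. E' a b \<Longrightarrow> E a b"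
  shows "connected U E"
  using assms(1) reach_mono[of U E' _ _ E, OF _ assms(2)] unfolding connected_def by blast

lemma reach_image:
  assumes "reach U E x y"
    and "\<And>a b. a \<in> U \<Longrightarrow> b \<in> U \<Longrightarrow> E a b \<Longrightarrow> c a \<noteq> c b \<Longrightarrow> F (c a) (c b)"
    and "c ` U \<subseteq> A"
  shows "reach A F (c x) (c y)"
  using assms(1) unfolding reach_def
proof (induction rule: rtranclp_induct)
  case (step y z)
  show ?case
  proof (cases "c y = c z")
    case False
    with step.hyps(2) assms(2,3) have "c y \<in> A \<and> c z \<in> A \<and> F (c y) (c z)" by blast
    with step.IH show ?thesis by (rule rtranclp.rtrancl_into_rtrancl)
  qed (use step.IH in simp)
qed simp

lemma reach_exit_edge:
  assumes "reach V E d y" and "d \<in> U" and "\<not> reach U E d y"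
  shows "\<exists>x u. reach U E d x \<and> u \<in> V - U \<and> E x u"
  using assms(1,3) unfolding reach_def
proof (induction rule: rtranclp_induct)
  case (step y z)
  show ?case
  proof (cases "reach U E d y")
    case True
    from True \<open>d \<in> U\<close> have "y \<in> U" by (rule reach_closed)
    have "z \<notin> U"
    proof
      assume "z \<in> U"
      with \<open>y \<in> U\<close> step.hyps(2) have "reach U E y z" by (intro reach_edge) auto
      with True have "reach U E d z" by (rule reach_trans)
      with step.prems show False unfolding reach_def by blast
    qed
    with True step.hyps(2) show ?thesis unfolding reach_def by blast
  next
    case False
    then show ?thesis using step.IH unfolding reach_def by blast
  qed
qed simp

lemma connected_if_reach_center:
  assumes "\<forall>x y. F x y \<longrightarrow> F y x" and "A \<noteq> {}" and "\<And>Y. Y \<in> A \<Longrightarrow> reach A F Y h"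
  shows "connected A F"
  unfolding connected_def using assms reach_sym reach_trans by metis

lemma connected_image:
  assumes "connected U E" and "c ` U = A"
    and "\<And>a b. a \<in> U \<Longrightarrow> b \<in> U \<Longrightarrow> E a b \<Longrightarrow> c a \<noteq> c b \<Longrightarrow> F (c a) (c b)"
  shows "connected A F"
  using assms reach_image[of U E _ _ c F A] unfolding connected_def by blast

definition GK_class :: "'a set \<Rightarrow> ('a \<Rightarrow> 'a \<Rightarrow> bool) \<Rightarrow> 'a set \<Rightarrow> 'a \<Rightarrow> 'a set" where
  "GK_class V E VK u = (if u \<in> VK then {u} else {y. reach (V - VK) E u y})"

lemma GK_class_self: "u \<in> GK_class V E VK u"
  unfolding GK_class_def by simp

lemma GK_class_outside: "u \<in> V - VK \<Longrightarrow> GK_class V E VK u \<subseteq> V - VK"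
  unfolding GK_class_def using reach_closed by fastforce

lemma GK_verts_eq_image: "VK \<subseteq> V \<Longrightarrow> GK_verts V E VK = GK_class V E VK ` V"
  unfolding GK_verts_def components_def GK_class_def by (auto simp: image_iff)

lemma GK_verts_Diff_singleton:
  assumes "VK \<subseteq> V" and "v \<in> VK"
  shows "GK_verts V E VK - {{v}} = GK_class V E VK ` (V - {v})"
proof -
  have "GK_class V E VK u = {v} \<longleftrightarrow> u = v" if "u \<in> V" for u
    using that assms(2) GK_class_self[of u] GK_class_outside[of u V VK E]
    by (cases "u \<in> VK") (auto simp: GK_class_def)
  then show ?thesis
    unfolding GK_verts_eq_image[OF assms(1)] by blast
qed

lemma GK_edges_sym: "\<forall>x y. E x y \<longrightarrow> E y x \<Longrightarrow> GK_edges V E VK X Y \<Longrightarrow> GK_edges V E VK Y X"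
  unfolding GK_edges_def by blast

lemma GK_edges_GK_class:
  assumes "graph V E" and "VK \<subseteq> V" and "E a b" and "GK_class V E VK a \<noteq> GK_class V E VK b"
  shows "GK_edges V E VK (GK_class V E VK a) (GK_class V E VK b)"
proof -
  have "a \<in> V" "b \<in> V" using assms(1,3) unfolding graph_def by auto
  then have "GK_class V E VK a \<in> GK_verts V E VK" "GK_class V E VK b \<in> GK_verts V E VK"
    using GK_verts_eq_image[OF assms(2)] by auto
  then show ?thesis
    unfolding GK_edges_def using assms(3,4) GK_class_self[of a] GK_class_self[of b] by blast
qed

lemma connected_GK_verts_Diff_component:
  assumes G: "graph V E" and conn: "connected V E" and "VK \<subseteq> V"
    and connK: "connected VK E" and X: "X \<in> components (V - VK) E"
  shows "connected (GK_verts V E VK - {X}) (GK_edges V E VK)"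
proof -
  let ?W = "GK_verts V E VK - {X}"
  have "X \<subseteq> V - VK"
    using X reach_closed unfolding components_def by fastforce
  then have singletons: "{u} \<in> ?W" if "u \<in> VK" for u
    using that unfolding GK_verts_def by auto
  obtain k where k: "k \<in> VK" using connK unfolding connected_def by blast
  have K_to_k: "reach ?W (GK_edges V E VK) {u} {k}" if "u \<in> VK" for u
  proof -
    have "reach VK E u k" using connK that k unfolding connected_def by blast
    then show ?thesis
      by (rule reach_image[where c = "\<lambda>u. {u}"]) (use singletons in \<open>auto simp: GK_edges_def\<close>)
  qed
  have "reach ?W (GK_edges V E VK) Y {k}" if Y: "Y \<in> ?W" for Y
  proof (cases "\<exists>u\<in>VK. Y = {u}")
    case True
    then show ?thesis using K_to_k by blast
  next
    case False
    then obtain d where d: "d \<in> V - VK" and Yd: "Y = {y. reach (V - VK) E d y}"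
      using Y unfolding GK_verts_def components_def by blast
    have "reach V E d k" using conn d k \<open>VK \<subseteq> V\<close> unfolding connected_def by blast
    moreover have "\<not> reach (V - VK) E d k" using reach_closed d k by fastforce
    ultimately obtain x u where "x \<in> Y" "u \<in> VK" "E x u"
      using reach_exit_edge[of V E d k "V - VK"] d Yd \<open>VK \<subseteq> V\<close> by auto
    moreover have "Y \<subseteq> V - VK" using d Yd reach_closed by fastforce
    ultimately have "reach ?W (GK_edges V E VK) Y {u}"
      using Y singletons unfolding GK_edges_def by (intro reach_edge) auto
    then show ?thesis using K_to_k[OF \<open>u \<in> VK\<close>] by (rule reach_trans)
  qed
  moreover have "\<forall>X Y. GK_edges V E VK X Y \<longrightarrow> GK_edges V E VK Y X"
    using G GK_edges_sym unfolding graph_def by blast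
  moreover have "?W \<noteq> {}" using singletons k by blast
  ultimately show ?thesis by (intro connected_if_reach_center) auto
qed

lemma connected_GK_verts:
  assumes "graph V E" and "connected V E" and "VK \<subseteq> V"
  shows "connected (GK_verts V E VK) (GK_edges V E VK)"
  by (rule connected_image[OF assms(2) GK_verts_eq_image[OF assms(3), symmetric]])
    (simp add: GK_edges_GK_class assms(1,3))

lemma connected_GK_verts_Diff_vertex:
  assumes "graph V E" and "connected (V - {v}) E" and "VK \<subseteq> V" and "v \<in> VK"
  shows "connected (GK_verts V E VK - {{v}}) (GK_edges V E VK)"
  by (rule connected_image[OF assms(2) GK_verts_Diff_singleton[OF assms(3,4), symmetric]])
    (simp add: GK_edges_GK_class assms(1,3))

lemma card_GK_verts_ge:
  assumes "finite V" and "VK \<subseteq> V"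
  shows "card VK \<le> card (GK_verts V E VK)"
proof -
  have "finite (GK_verts V E VK)"
    using assms by (simp add: GK_verts_eq_image)
  then have "card ((\<lambda>v. {v}) ` VK) \<le> card (GK_verts V E VK)"
    by (rule card_mono) (auto simp: GK_verts_def)
  then show ?thesis by (simp add: card_image)
qed

theorem lemma4p3:
  fixes V VK :: "'a set" and E EK :: "'a \<Rightarrow> 'a \<Rightarrow> bool"
  assumes "graph V E"
    and "two_connected V E"
    and "subgraph VK EK V E"
    and "connected VK EK"
    and "card VK \<ge> 3"
  shows "two_connected (GK_verts V E VK) (GK_edges V E VK)"
proof -
  have KV: "VK \<subseteq> V" and "\<And>a b. EK a b \<Longrightarrow> E a b"
    using assms(3) unfolding subgraph_def by blast+
  with assms(4) have connK: "connected VK E" by (blast intro: connected_mono)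
  have connG: "connected V E" using assms(2) unfolding two_connected_def by blast
  have "connected (GK_verts V E VK - {X}) (GK_edges V E VK)"
    if "X \<in> GK_verts V E VK" for X
  proof -
    from that consider (vertex) v where "v \<in> VK" "X = {v}"
      | (component) "X \<in> components (V - VK) E"
      unfolding GK_verts_def by blast
    then show ?thesis
    proof cases
      case (vertex v)
      with KV assms(2) have "connected (V - {v}) E" unfolding two_connected_def by blast
      with assms(1) KV vertex show ?thesis by (simp add: connected_GK_verts_Diff_vertex)
    next
      case component
      with assms(1) connG KV connK show ?thesis by (rule connected_GK_verts_Diff_component)
    qed
  qed
  moreover have "card VK \<le> card (GK_verts V E VK)"
    using assms(1) KV unfolding graph_def by (blast intro: card_GK_verts_ge)
  ultimately show ?thesis
    using assms(1,5) connG KV connected_GK_verts unfolding two_connected_def by auto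
qed

end
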